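(* Let $G=(V,E,w_G)$ be any weighted undirected graph, let $\varepsilon\in(0,1)$, let $H=(V,E_H,w_H)$ be a $(1\pm\varepsilon)$-cut sparsifier of $G$, let $\beta\in(0,1)$ and let $\mathcal T$ be any $\beta$-balanced HC-tree on the vertex set $V$. Then $$(1-\varepsilon)\cdot\beta\cdot C_G(\mathcal T)\;\le\; C_H(\mathcal T)\;\le\;(1+\varepsilon)\cdot\frac{1}{\beta}\cdot C_G(\mathcal T).$$
   Context: Let $G=(V,E,w)$ be an undirected graph with nonnegative edge weights $w$. A hierarchical clustering tree (HC-tree) of $G$ is a rooted tree $\mathcal T$ whose leaves are in bijection with $V$. For a node $z$, $\mathcal T[z]$ is the subtree rooted at $z$ and $\mathrm{leaves}(\mathcal T[z])\subseteq V$ its set of leaves. For $u,v\in V$, $u\vee v$ denotes their lowest common ancestor in $\mathcal T$. The cost of $\mathcal T$ on $G$ is $C_G(\mathcal T)=\sum_{(u,v)\in E} w(u,v)\,|\mathrm{leaves}(\mathcal T[u\vee v])|$. For disjoint $A,B\subseteq V$, $w(A,B)$ denotes the total weight of edges with one endpoint in $A$ and the other in $B$, and $\bar A=V\setminus A$. If $\mathcal T$ is binary and $z$ is an internal node with children $z_1,z_2$, where $|\mathrm{leaves}(\mathcal T[z_1])|\le|\mathrm{leaves}(\mathcal T[z_2])|$, then $\mathrm{cut}(\mathcal T[z]):=(A,B)$ with $A=\mathrm{leaves}(\mathcal T[z_1])$, $B=\mathrm{leaves}(\mathcal T[z_2])$. For $0<\beta<1$, a pair of disjoint sets $(A,B)$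 is $\beta$-balanced if $\max\{|A|,|B|\}\le(1-\beta)|A\cup B|$; a binary HC-tree is $\beta$-balanced if $\mathrm{cut}(\mathcal T[z])$ is $\beta$-balanced for every internal node $z$. A weighted graph $H=(V,E_H,w_H)$ with $E_H\subseteq E$ is a $(1\pm\varepsilon)$-cut sparsifier of $G=(V,E,w_G)$ if for every nonempty $A\subsetneq V$: $(1-\varepsilon)w_G(A,\bar A)\le w_H(A,\bar A)\le(1+\varepsilon)w_G(A,\bar A)$. *)

theory Defs
  imports Complex_Main
begin

definition wgraph :: "'a set \<Rightarrow> 'a set set \<Rightarrow> ('a set \<Rightarrow> real) \<Rightarrow> bool" where
  "wgraph V E w \<longleftrightarrow> finite V \<and>
     (\<forall>e\<in>E. \<exists>u v. e = {u, v} \<and> u \<noteq> v \<and> u \<in> V \<and> v \<in> V) \<and>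
     (\<forall>e\<in>E. w e \<ge> 0)"

definition cut_weight :: "'a set set \<Rightarrow> ('a set \<Rightarrow> real) \<Rightarrow> 'a set \<Rightarrow> 'a set \<Rightarrow> real" where
  "cut_weight E w A B = (\<Sum>e\<in>{e\<in>E. \<exists>u v. e = {u, v} \<and> u \<in> A \<and> v \<in> B}. w e)"

definition cut_sparsifier ::
  "real \<Rightarrow> 'a set \<Rightarrow> 'a set set \<Rightarrow> ('a set \<Rightarrow> real) \<Rightarrow> 'a set set \<Rightarrow> ('a set \<Rightarrow> real) \<Rightarrow> bool" where
  "cut_sparsifier eps V E wG EH wH \<longleftrightarrow> wgraph V EH wH \<and> EH \<subseteq> E \<and>
     (\<forall>A. A \<noteq> {} \<and> A \<subset> V \<longrightarrow>
        (1 - eps) * cut_weight E wG A (V - A) \<le> cut_weight EH wH A (V - A) \<and>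
        cut_weight EH wH A (V - A) \<le> (1 + eps) * cut_weight E wG A (V - A))"

datatype 'a hctree = Leaf 'a | Node "'a hctree" "'a hctree"

fun leaf_list :: "'a hctree \<Rightarrow> 'a list" where
  "leaf_list (Leaf x) = [x]"
| "leaf_list (Node l r) = leaf_list l @ leaf_list r"

definition leaves :: "'a hctree \<Rightarrow> 'a set" where
  "leaves T = set (leaf_list T)"

definition hc_tree :: "'a set \<Rightarrow> 'a hctree \<Rightarrow> bool" where
  "hc_tree V T \<longleftrightarrow> distinct (leaf_list T) \<and> leaves T = V"

fun lca_tree :: "'a hctree \<Rightarrow> 'a set \<Rightarrow> 'a hctree" where
  "lca_tree (Leaf x) S = Leaf x"
| "lca_tree (Node l r) S =
     (if S \<subseteq> leaves l then lca_tree l S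
      else if S \<subseteq> leaves r then lca_tree r S
      else Node l r)"

definition lca :: "'a hctree \<Rightarrow> 'a \<Rightarrow> 'a \<Rightarrow> 'a hctree" where
  "lca T u v = lca_tree T {u, v}"

definition hc_cost :: "'a set set \<Rightarrow> ('a set \<Rightarrow> real) \<Rightarrow> 'a hctree \<Rightarrow> real" where
  "hc_cost E w T = (\<Sum>e\<in>E. w e * real (card (leaves (lca_tree T e))))"

fun internal_subtrees :: "'a hctree \<Rightarrow> 'a hctree set" where
  "internal_subtrees (Leaf x) = {}"
| "internal_subtrees (Node l r) = insert (Node l r) (internal_subtrees l \<union> internal_subtrees r)"

fun cut :: "'a hctree \<Rightarrow> 'a set \<times> 'a set" where
  "cut (Leaf x) = ({}, {x})"
| "cut (Node l r) = (if card (leaves l) \<le> card (leaves r) then (leaves l, leaves r)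
                     else (leaves r, leaves l))"

definition balanced_pair :: "real \<Rightarrow> 'a set \<times> 'a set \<Rightarrow> bool" where
  "balanced_pair \<beta> AB \<longleftrightarrow> (case AB of (A, B) \<Rightarrow>
     real (max (card A) (card B)) \<le> (1 - \<beta>) * real (card (A \<union> B)))"

definition balanced_tree :: "real \<Rightarrow> 'a hctree \<Rightarrow> bool" where
  "balanced_tree \<beta> T \<longleftrightarrow> (\<forall>z\<in>internal_subtrees T. balanced_pair \<beta> (cut z))"

end

theory Submission
  imports Defs
begin

text \<open>Twice the cost of an HC-tree is a nonnegative linear combination of the cut weights
  \<open>w(S, V - S)\<close> over the leaf sets \<open>S\<close> of proper subtrees: give \<open>S\<close> the coefficient
  \<open>|sibling S| + [S is a leaf]\<close>. For a single edge \<open>{u, v}\<close> the subtrees it crosses are those on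
  the two paths from \<open>u\<close> and \<open>v\<close> up to (excluding) their lowest common ancestor \<open>z\<close>, and along
  each path the coefficients telescope to the size of the child of \<open>z\<close> at its top, so the
  total is \<open>2 |leaves z|\<close>. A \<open>(1 \<plusminus> \<epsilon>)\<close> cut sparsifier therefore changes the cost by a factor
  in \<open>[1 - \<epsilon>, 1 + \<epsilon>]\<close> for every HC-tree.\<close>

lemma leaves_Leaf [simp]: "leaves (Leaf x) = {x}"
  by (simp add: leaves_def)

lemma leaves_Node [simp]: "leaves (Node l r) = leaves l \<union> leaves r"
  by (simp add: leaves_def)

lemma leaves_nonempty: "leaves t \<noteq> {}"
  by (induction t) auto

lemma finite_leaves [simp]: "finite (leaves t)"
  by (simp add: leaves_def)

lemma distinct_leaf_list_NodeD:
  assumes "distinct (leaf_list (Node l r))"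
  shows "distinct (leaf_list l)" "distinct (leaf_list r)" "leaves l \<inter> leaves r = {}"
  using assms by (simp_all add: leaves_def)

lemma card_leaves_Node:
  assumes "distinct (leaf_list (Node l r))"
  shows "card (leaves (Node l r)) = card (leaves l) + card (leaves r)"
  using card_Un_disjoint[OF finite_leaves finite_leaves distinct_leaf_list_NodeD(3)[OF assms]]
  by simp

fun is_leaf :: "'a hctree \<Rightarrow> bool" where
  "is_leaf (Leaf x) = True"
| "is_leaf (Node l r) = False"

fun subtree_sum :: "('a set \<Rightarrow> real) \<Rightarrow> 'a hctree \<Rightarrow> real" where
  "subtree_sum f (Leaf x) = 0"
| "subtree_sum f (Node l r) =
     (real (card (leaves r)) + of_bool (is_leaf l)) * f (leaves l)
   + (real (card (leaves l)) + of_bool (is_leaf r)) * f (leaves r)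
   + subtree_sum f l + subtree_sum f r"

lemma subtree_sum_linear:
  "subtree_sum (\<lambda>A. \<Sum>e\<in>E. c e * g e A) t = (\<Sum>e\<in>E. c e * subtree_sum (g e) t)"
  by (induction t) (simp_all add: sum.distrib sum_distrib_left algebra_simps)

lemma subtree_sum_cmult: "subtree_sum (\<lambda>A. c * f A) t = c * subtree_sum f t"
  by (induction t) (simp_all add: algebra_simps)

lemma subtree_sum_mono:
  assumes "distinct (leaf_list t)"
    and "\<And>A. A \<noteq> {} \<Longrightarrow> A \<subset> leaves t \<Longrightarrow> f A \<le> g A"
  shows "subtree_sum f t \<le> subtree_sum g t"
  using assms
proof (induction t)
  case (Leaf x)
  then show ?case by simp
next
  case (Node l r)
  note disj = distinct_leaf_list_NodeD[OF Node.prems(1)]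
  have sub: "leaves l \<subset> leaves (Node l r)" "leaves r \<subset> leaves (Node l r)"
    using disj(3) leaves_nonempty[of l] leaves_nonempty[of r] by auto
  have "f (leaves l) \<le> g (leaves l)" "f (leaves r) \<le> g (leaves r)"
    using Node.prems(2)[OF leaves_nonempty sub(1)] Node.prems(2)[OF leaves_nonempty sub(2)] .
  moreover have "subtree_sum f l \<le> subtree_sum g l"
    using disj(1) by (rule Node.IH(1)) (use Node.prems(2) sub(1) in \<open>meson psubset_trans\<close>)
  moreover have "subtree_sum f r \<le> subtree_sum g r"
    using disj(2) by (rule Node.IH(2)) (use Node.prems(2) sub(2) in \<open>meson psubset_trans\<close>)
  ultimately show ?case
    by (simp add: add_mono mult_left_mono)
qed

definition crosses :: "'a set \<Rightarrow> 'a set \<Rightarrow> bool" where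
  "crosses e A \<longleftrightarrow> (\<exists>u v. e = {u, v} \<and> u \<in> A \<and> v \<notin> A)"

lemma crosses_doubleton: "crosses {u, v} A \<longleftrightarrow> (u \<in> A \<longleftrightarrow> v \<notin> A)"
  unfolding crosses_def by (auto simp: doubleton_eq_iff)

lemma subtree_sum_crosses_outside:
  assumes "u \<notin> leaves t" "v \<notin> leaves t"
  shows "subtree_sum (\<lambda>A. of_bool (crosses {u, v} A)) t = 0"
  using assms by (induction t) (simp_all add: crosses_doubleton)

lemma subtree_sum_crosses_inside:
  assumes "distinct (leaf_list t)" "crosses {u, v} (leaves t)"
  shows "subtree_sum (\<lambda>A. of_bool (crosses {u, v} A)) t
       = real (card (leaves t)) - of_bool (is_leaf t)"
  using assms
proof (induction t)
  case (Leaf x)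
  then show ?case by simp
next
  case (Node l r)
  note disj = distinct_leaf_list_NodeD[OF Node.prems(1)]
  note card = card_leaves_Node[OF Node.prems(1)]
  from Node.prems(2) disj(3) consider
    "crosses {u, v} (leaves l)" "u \<notin> leaves r" "v \<notin> leaves r"
  | "crosses {u, v} (leaves r)" "u \<notin> leaves l" "v \<notin> leaves l"
    by (auto simp: crosses_doubleton)
  then show ?case
  proof cases
    case 1
    then show ?thesis
      using Node.IH(1) disj card subtree_sum_crosses_outside[of u r v]
      by (simp add: crosses_doubleton)
  next
    case 2
    then show ?thesis
      using Node.IH(2) disj card subtree_sum_crosses_outside[of u l v]
      by (simp add: crosses_doubleton)
  qed
qed

lemma subtree_sum_crosses_lca:
  assumes "distinct (leaf_list t)" "u \<noteq> v" "u \<in> leaves t" "v \<in> leaves t"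
  shows "subtree_sum (\<lambda>A. of_bool (crosses {u, v} A)) t
       = 2 * real (card (leaves (lca_tree t {u, v})))"
  using assms
proof (induction t)
  case (Leaf x)
  then show ?case by simp
next
  case (Node l r)
  note disj = distinct_leaf_list_NodeD[OF Node.prems(1)]
  from Node.prems(3,4) disj(3) consider
    "u \<in> leaves l" "v \<in> leaves l" "u \<notin> leaves r" "v \<notin> leaves r"
  | "u \<in> leaves r" "v \<in> leaves r" "u \<notin> leaves l" "v \<notin> leaves l"
  | "crosses {u, v} (leaves l)" "crosses {u, v} (leaves r)"
    by (auto simp: crosses_doubleton)
  then show ?case
  proof cases
    case 1
    then show ?thesis
      using Node.IH(1) disj Node.prems(2) subtree_sum_crosses_outside[of u r v]
      by (simp add: crosses_doubleton)
  next
    case 2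
    then show ?thesis
      using Node.IH(2) disj Node.prems(2) subtree_sum_crosses_outside[of u l v]
      by (simp add: crosses_doubleton)
  next
    case 3
    then have "lca_tree (Node l r) {u, v} = Node l r"
      by (auto simp: crosses_doubleton)
    with 3 show ?thesis
      using disj card_leaves_Node[OF Node.prems(1)]
      by (simp add: subtree_sum_crosses_inside)
  qed
qed

lemma finite_edges:
  assumes "wgraph V E w"
  shows "finite E"
proof (rule finite_subset)
  show "E \<subseteq> Pow V"
    using assms unfolding wgraph_def by auto
  show "finite (Pow V)"
    using assms unfolding wgraph_def by simp
qed

lemma cut_weight_eq_sum_crosses:
  assumes "wgraph V E w"
  shows "cut_weight E w A (V - A) = (\<Sum>e\<in>E. w e * of_bool (crosses e A))"
proof -
  have crossing_iff: "(\<exists>u v. e = {u, v} \<and> u \<in> A \<and> v \<in> V - A) \<longleftrightarrow> crosses e A"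
    if "e \<in> E" for e
  proof -
    obtain a b where "e = {a, b}" "a \<in> V" "b \<in> V"
      using assms \<open>e \<in> E\<close> unfolding wgraph_def by blast
    then show ?thesis by (auto simp: crosses_def doubleton_eq_iff)
  qed
  have "cut_weight E w A (V - A)
      = (\<Sum>e\<in>E. if \<exists>u v. e = {u, v} \<and> u \<in> A \<and> v \<in> V - A then w e else 0)"
    unfolding cut_weight_def by (rule sum.inter_filter[OF finite_edges[OF assms]])
  also have "\<dots> = (\<Sum>e\<in>E. w e * of_bool (crosses e A))"
    using crossing_iff by (intro sum.cong) auto
  finally show ?thesis .
qed

lemma hc_cost_eq_subtree_sum:
  assumes "wgraph V E w" "hc_tree V T"
  shows "2 * hc_cost E w T = subtree_sum (\<lambda>A. cut_weight E w A (V - A)) T"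
proof -
  have "subtree_sum (\<lambda>A. cut_weight E w A (V - A)) T
      = (\<Sum>e\<in>E. w e * subtree_sum (\<lambda>A. of_bool (crosses e A)) T)"
    by (simp add: cut_weight_eq_sum_crosses[OF assms(1)] subtree_sum_linear)
  also have "\<dots> = (\<Sum>e\<in>E. w e * (2 * real (card (leaves (lca_tree T e)))))"
  proof (rule sum.cong)
    fix e assume "e \<in> E"
    then obtain u v where "e = {u, v}" "u \<noteq> v" "u \<in> V" "v \<in> V"
      using assms(1) unfolding wgraph_def by blast
    moreover have "subtree_sum (\<lambda>A. of_bool (crosses {u, v} A)) T
        = 2 * real (card (leaves (lca_tree T {u, v})))"
      using assms(2) \<open>u \<noteq> v\<close> \<open>u \<in> V\<close> \<open>v \<in> V\<close>
      by (intro subtree_sum_crosses_lca) (auto simp: hc_tree_def)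
    ultimately show "w e * subtree_sum (\<lambda>A. of_bool (crosses e A)) T
             = w e * (2 * real (card (leaves (lca_tree T e))))"
      by simp
  qed simp
  finally show ?thesis
    unfolding hc_cost_def by (simp add: sum_distrib_left algebra_simps)
qed

lemma hc_cost_nonneg: "wgraph V E w \<Longrightarrow> 0 \<le> hc_cost E w T"
  unfolding hc_cost_def wgraph_def by (auto intro: sum_nonneg)

lemma cut_sparsifier_hc_cost_bounds:
  assumes "wgraph V E wG" "cut_sparsifier eps V E wG EH wH" "hc_tree V T"
  shows "(1 - eps) * hc_cost E wG T \<le> hc_cost EH wH T"
    and "hc_cost EH wH T \<le> (1 + eps) * hc_cost E wG T"
proof -
  have H: "wgraph V EH wH" and distinct: "distinct (leaf_list T)" and V: "leaves T = V"
    using assms(2,3) unfolding cut_sparsifier_def hc_tree_def by auto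
  note cuts = assms(2)[unfolded cut_sparsifier_def, THEN conjunct2, THEN conjunct2, rule_format]
  note cost_G = hc_cost_eq_subtree_sum[OF assms(1,3)]
    and cost_H = hc_cost_eq_subtree_sum[OF H assms(3)]
  have "subtree_sum (\<lambda>A. (1 - eps) * cut_weight E wG A (V - A)) T
      \<le> subtree_sum (\<lambda>A. cut_weight EH wH A (V - A)) T"
    using distinct by (rule subtree_sum_mono) (use cuts V in blast)
  then show "(1 - eps) * hc_cost E wG T \<le> hc_cost EH wH T"
    by (simp add: subtree_sum_cmult flip: cost_G cost_H)
  have "subtree_sum (\<lambda>A. cut_weight EH wH A (V - A)) T
      \<le> subtree_sum (\<lambda>A. (1 + eps) * cut_weight E wG A (V - A)) T"
    using distinct by (rule subtree_sum_mono) (use cuts V in blast)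
  then show "hc_cost EH wH T \<le> (1 + eps) * hc_cost E wG T"
    by (simp add: subtree_sum_cmult flip: cost_G cost_H)
qed

theorem theorem3p1:
  fixes V :: "'a set" and E EH :: "'a set set" and wG wH :: "'a set \<Rightarrow> real"
    and eps \<beta> :: real and T :: "'a hctree"
  assumes "wgraph V E wG"
    and "0 < eps" and "eps < 1"
    and "cut_sparsifier eps V E wG EH wH"
    and "0 < \<beta>" and "\<beta> < 1"
    and "hc_tree V T"
    and "balanced_tree \<beta> T"
  shows "(1 - eps) * \<beta> * hc_cost E wG T \<le> hc_cost EH wH T
       \<and> hc_cost EH wH T \<le> (1 + eps) * (1 / \<beta>) * hc_cost E wG T"
proof
  let ?C = "hc_cost E wG T"
  have C: "0 \<le> ?C"
    using hc_cost_nonneg[OF assms(1)] .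
  have "(1 - eps) * \<beta> * ?C = \<beta> * ((1 - eps) * ?C)"
    by simp
  also have "\<dots> \<le> (1 - eps) * ?C"
    using C assms(3,5,6) by (intro mult_left_le_one_le) auto
  also have "\<dots> \<le> hc_cost EH wH T"
    using cut_sparsifier_hc_cost_bounds(1)[OF assms(1,4,7)] .
  finally show "(1 - eps) * \<beta> * ?C \<le> hc_cost EH wH T" .
  have "hc_cost EH wH T \<le> 1 * ((1 + eps) * ?C)"
    using cut_sparsifier_hc_cost_bounds(2)[OF assms(1,4,7)] by simp
  also have "\<dots> \<le> (1 / \<beta>) * ((1 + eps) * ?C)"
    using C assms(2,5,6) by (intro mult_right_mono) auto
  finally show "hc_cost EH wH T \<le> (1 + eps) * (1 / \<beta>) * ?C"
    by (simp add: ac_simps)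
qed

end
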